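(* Let $n$ be a positive integer and let $K$ and $L$ be number fields of degree $n$, both Galois over $\mathbb{Q}$, contained in a fixed algebraic closure of $\mathbb{Q}$. If $\delta_{K,L}>1-\frac{2}{n^2}$, then $K=L$.
   Context: $\widetilde E$ denotes the Galois closure of a number field $E$ over $\mathbb{Q}$ and $\widetilde K\widetilde L$ the compositum; $\delta_{K,L}:=\frac{2}{[\widetilde K\widetilde L:\mathbb{Q}]}+1-\frac{1}{[\widetilde K:\mathbb{Q}]}-\frac{1}{[\widetilde L:\mathbb{Q}]}$. *)

theory Defs
  imports "HOL-Computational_Algebra.Polynomial" Complex_Main
begin

text \<open>Ambient algebraic closure of Q: number fields are taken as subfields of the complex numbers.\<close>

definition subfield_of_C :: "complex set \<Rightarrow> bool" where
  "subfield_of_C F \<longleftrightarrow> 0 \<in> F \<and> 1 \<in> F \<and>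
     (\<forall>x\<in>F. \<forall>y\<in>F. x + y \<in> F \<and> x - y \<in> F \<and> x * y \<in> F) \<and>
     (\<forall>x\<in>F. x \<noteq> 0 \<longrightarrow> inverse x \<in> F)"

definition qdeg :: "complex set \<Rightarrow> nat" where
  "qdeg F = vector_space.dim (\<lambda>(q::rat) (z::complex). of_rat q * z) F"

definition qfinite_dim :: "complex set \<Rightarrow> bool" where
  "qfinite_dim F \<longleftrightarrow> (\<exists>B. finite B \<and>
     F \<subseteq> module.span (\<lambda>(q::rat) (z::complex). of_rat q * z) B)"

definition number_field :: "complex set \<Rightarrow> bool" where
  "number_field F \<longleftrightarrow> subfield_of_C F \<and> qfinite_dim F"

text \<open>Normal over Q (Galois, as char 0): every irreducible rational polynomial having a root
  in F has all its roots in F.\<close>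

definition normal_over_Q :: "complex set \<Rightarrow> bool" where
  "normal_over_Q F \<longleftrightarrow> (\<forall>p :: rat poly. irreducible p \<longrightarrow>
      (\<exists>a\<in>F. poly (map_poly of_rat p) a = 0) \<longrightarrow>
      (\<forall>b. poly (map_poly of_rat p) b = 0 \<longrightarrow> b \<in> F))"

definition galois_over_Q :: "complex set \<Rightarrow> bool" where
  "galois_over_Q F \<longleftrightarrow> number_field F \<and> normal_over_Q F"

definition galois_closure :: "complex set \<Rightarrow> complex set" where
  "galois_closure F = \<Inter>{E. subfield_of_C E \<and> normal_over_Q E \<and> F \<subseteq> E}"

definition compositum :: "complex set \<Rightarrow> complex set \<Rightarrow> complex set" where
  "compositum K L = \<Inter>{E. subfield_of_C E \<and> K \<union> L \<subseteq> E}"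

definition delta :: "complex set \<Rightarrow> complex set \<Rightarrow> real" where
  "delta K L = 2 / real (qdeg (compositum (galois_closure K) (galois_closure L)))
      + 1 - 1 / real (qdeg (galois_closure K)) - 1 / real (qdeg (galois_closure L))"

end

theory Submission imports Defs begin

text \<open>Galois number fields are their own Galois closures, so \<open>\<delta>(K,L) = 2/[KL:\<rat>] + 1 - 2/n\<close>.
  If \<open>K \<noteq> L\<close>, say \<open>x \<in> L - K\<close>, then for a \<open>\<rat>\<close>-basis \<open>B\<close> of \<open>K\<close> the set \<open>B \<union> xB\<close> is
  \<open>\<rat>\<close>-independent in \<open>KL\<close>, so \<open>[KL:\<rat>] \<ge> 2n\<close> and \<open>\<delta>(K,L) \<le> 1 - 1/n \<le> 1 - 2/n\<^sup>2\<close> once \<open>n \<ge> 2\<close>;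
  for \<open>n = 1\<close> both fields are \<open>\<rat>\<close>.\<close>

interpretation Q: vector_space "\<lambda>(q::rat) (z::complex). of_rat q * z"
  by unfold_locales (auto simp: algebra_simps of_rat_add of_rat_mult)

lemma subfield_of_C_of_nat: "subfield_of_C F \<Longrightarrow> of_nat k \<in> F"
  by (induction k) (auto simp: subfield_of_C_def)

lemma subfield_of_C_of_int:
  assumes F: "subfield_of_C F"
  shows "of_int k \<in> F"
proof (cases "k \<ge> 0")
  case True
  then show ?thesis using subfield_of_C_of_nat[OF F, of "nat k"] by simp
next
  case False
  then have "of_int k = (0::complex) - of_nat (nat (-k))" by simp
  then show ?thesis using F subfield_of_C_of_nat[OF F, of "nat (-k)"]
    unfolding subfield_of_C_def by metis
qed

lemma subfield_of_C_divide: "subfield_of_C F \<Longrightarrow> x \<in> F \<Longrightarrow> y \<in> F \<Longrightarrow> x / y \<in> F"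
  unfolding subfield_of_C_def by (cases "y = 0") (auto simp: divide_inverse)

lemma subfield_of_C_of_rat:
  assumes F: "subfield_of_C F"
  shows "of_rat q \<in> F"
proof -
  obtain a b where "quotient_of q = (a, b)" by (cases "quotient_of q")
  then have "q = of_int a / of_int b" by (rule quotient_of_div)
  then have "of_rat q = (of_int a / of_int b :: complex)" by (simp add: of_rat_divide)
  then show ?thesis
    using subfield_of_C_divide[OF F subfield_of_C_of_int[OF F] subfield_of_C_of_int[OF F]] by simp
qed

lemma subfield_of_C_subspace: "subfield_of_C F \<Longrightarrow> Q.subspace F"
  unfolding Q.subspace_def using subfield_of_C_of_rat by (auto simp: subfield_of_C_def)

lemma galois_closure_eq_self: "galois_over_Q K \<Longrightarrow> galois_closure K = K"
  unfolding galois_closure_def galois_over_Q_def number_field_def by blast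

lemma subfield_of_C_compositum: "subfield_of_C (compositum K L)"
  unfolding compositum_def subfield_of_C_def by auto

lemma compositum_upper: "K \<union> L \<subseteq> compositum K L"
  unfolding compositum_def by auto

lemma compositum_commute: "compositum K L = compositum L K"
  unfolding compositum_def by (simp add: Un_commute)

lemma number_field_basis:
  assumes "number_field K"
  obtains B where "finite B" "Q.independent B" "Q.span B = K" "card B = qdeg K"
proof -
  obtain W where W: "finite W" "K \<subseteq> Q.span W"
    using assms unfolding number_field_def qfinite_dim_def by auto
  obtain B where B: "B \<subseteq> K" "Q.independent B" "K \<subseteq> Q.span B" "card B = Q.dim K"
    using Q.basis_exists by blast
  have "finite B" using Q.independent_span_bound[OF W(1) B(2)] B(1) W(2) by auto
  moreover have "Q.span B = K"
    using Q.span_subspace[OF B(1,3)] subfield_of_C_subspace assms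
    unfolding number_field_def by blast
  ultimately show ?thesis using that B unfolding qdeg_def by auto
qed

text \<open>The hypothesis \<open>qdeg E > 0\<close> excludes infinite dimension, where \<open>qdeg\<close> is \<open>0\<close>.\<close>

lemma card_independent_le_qdeg:
  assumes "Q.independent D" "D \<subseteq> E" "qdeg E > 0"
  shows "card D \<le> qdeg E"
proof -
  obtain C where C: "C \<subseteq> E" "Q.independent C" "E \<subseteq> Q.span C" "card C = qdeg E"
    using Q.basis_exists unfolding qdeg_def by blast
  then have "finite C" using assms(3) card_gt_0_iff by metis
  then show ?thesis using Q.independent_span_bound[OF _ assms(1), of C] assms(2) C by auto
qed

lemma qdeg_eq_1_subset:
  assumes K: "subfield_of_C K" and L: "subfield_of_C L" and "qdeg L = 1"
  shows "L \<subseteq> K"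
proof
  fix x assume x: "x \<in> L"
  show "x \<in> K"
  proof (rule ccontr)
    assume "x \<notin> K"
    moreover have "Q.span {1} \<subseteq> K"
      using Q.span_minimal[OF _ subfield_of_C_subspace[OF K], of "{1}"] K
      unfolding subfield_of_C_def by auto
    ultimately have "Q.independent {x, 1}"
      using Q.independent_insertI[of 1 "{}"] Q.independent_insertI[of x "{1}"] by auto
    moreover have "{x, 1} \<subseteq> L" using x L unfolding subfield_of_C_def by auto
    ultimately have "card {x, 1} \<le> 1"
      using card_independent_le_qdeg \<open>qdeg L = 1\<close> by fastforce
    moreover have "x \<noteq> 1" using \<open>x \<notin> K\<close> K unfolding subfield_of_C_def by auto
    ultimately show False by simp
  qed
qed

lemma disjoint_times_image:
  assumes K: "subfield_of_C K" and "B \<subseteq> K" "0 \<notin> B" "x \<notin> K"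
  shows "B \<inter> (*) x ` B = {}"
proof (rule ccontr)
  assume "B \<inter> (*) x ` B \<noteq> {}"
  then obtain b b' where b: "b \<in> B" "b' \<in> B" "b' = x * b" by auto
  then have "b \<noteq> 0" using assms(3) by blast
  then have "x = b' / b" using b(3) by simp
  moreover have "b' / b \<in> K" using b(1,2) assms(2) subfield_of_C_divide[OF K] by blast
  ultimately show False using assms(4) by simp
qed

lemma card_Un_times_image:
  assumes K: "subfield_of_C K" and "finite B" "B \<subseteq> K" "0 \<notin> B" "x \<notin> K"
  shows "card (B \<union> (*) x ` B) = 2 * card B"
proof -
  have "card (B \<union> (*) x ` B) = card B + card ((*) x ` B)"
    using card_Un_disjoint assms(2) disjoint_times_image[OF K assms(3-5)] by blast
  also have "card ((*) x ` B) = card B"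
    using assms(5) K inj_on_mult card_image unfolding subfield_of_C_def by metis
  finally show ?thesis by simp
qed

lemma independent_Un_times_image:
  assumes K: "subfield_of_C K" and B: "finite B" "Q.independent B" "Q.span B = K"
    and x: "x \<notin> K"
  shows "Q.independent (B \<union> (*) x ` B)"
proof -
  have inj: "inj_on ((*) x) B"
    using x K inj_on_mult unfolding subfield_of_C_def by metis
  have B_coeffs:
    "\<And>g. (\<Sum>b\<in>B. of_rat (g b) * b) = (0::complex) \<Longrightarrow> \<forall>b\<in>B. g b = 0"
    using B(1,2) unfolding Q.independent_explicit_finite_subsets by blast
  show ?thesis
  proof (rule Q.independent_if_scalars_zero)
    show "finite (B \<union> (*) x ` B)" using B(1) by simp
  next
    fix f d
    assume sum: "(\<Sum>d\<in>B \<union> (*) x ` B. of_rat (f d) * d) = 0" and d: "d \<in> B \<union> (*) x ` B"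
    define u where "u = (\<Sum>b\<in>B. of_rat (f b) * b)"
    define v where "v = (\<Sum>b\<in>B. of_rat (f (x * b)) * b)"
    have u_v_K: "u \<in> K" "v \<in> K"
      unfolding u_def v_def B(3)[symmetric] by (intro Q.span_sum Q.span_scale Q.span_base; simp)+
    have "B \<subseteq> K" "0 \<notin> B" using B(2,3) Q.span_superset Q.dependent_zero by blast+
    then have "B \<inter> (*) x ` B = {}" using disjoint_times_image[OF K _ _ x] by blast
    then have "(\<Sum>d\<in>B \<union> (*) x ` B. of_rat (f d) * d) = u + (\<Sum>d\<in>(*) x ` B. of_rat (f d) * d)"
      unfolding u_def using B(1) by (simp add: sum.union_disjoint)
    also have "(\<Sum>d\<in>(*) x ` B. of_rat (f d) * d) = x * v"
      unfolding v_def sum.reindex[OF inj] sum_distrib_left by (rule sum.cong) auto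
    finally have uv: "u + x * v = 0" using sum by simp
    have "v = 0"
    proof (rule ccontr)
      assume "v \<noteq> 0"
      then have "x = (0 - u) / v" using uv by (simp add: field_simps eq_neg_iff_add_eq_0)
      moreover have "0 - u \<in> K" using u_v_K K unfolding subfield_of_C_def by blast
      ultimately show False using subfield_of_C_divide[OF K _ u_v_K(2)] x by metis
    qed
    with uv have "u = 0" by simp
    have "\<forall>b\<in>B. f b = 0" using B_coeffs[of f] \<open>u = 0\<close> unfolding u_def by blast
    moreover have "\<forall>b\<in>B. f (x * b) = 0"
      using B_coeffs[of "\<lambda>b. f (x * b)"] \<open>v = 0\<close> unfolding v_def by blast
    ultimately show "f d = 0" using d by blast
  qed
qed

lemma qdeg_double_le:
  assumes K: "number_field K" and E: "subfield_of_C E" and "K \<subseteq> E"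
    and x: "x \<in> E" "x \<notin> K" and "qdeg E > 0"
  shows "2 * qdeg K \<le> qdeg E"
proof -
  have subK: "subfield_of_C K" using K unfolding number_field_def by simp
  obtain B where B: "finite B" "Q.independent B" "Q.span B = K" "card B = qdeg K"
    using number_field_basis[OF K] by blast
  have "B \<subseteq> K" "0 \<notin> B" using B(2,3) Q.span_superset Q.dependent_zero by blast+
  moreover have "B \<union> (*) x ` B \<subseteq> E"
    using \<open>B \<subseteq> K\<close> \<open>K \<subseteq> E\<close> x(1) E unfolding subfield_of_C_def by blast
  ultimately show ?thesis
    using card_independent_le_qdeg[OF independent_Un_times_image[OF subK B(1-3) x(2)]]
      card_Un_times_image[OF subK B(1)] x(2) B(4) \<open>qdeg E > 0\<close> by simp
qed

lemma qdeg_compositum_double_le: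
  assumes K: "number_field K" and L: "number_field L" and "K \<noteq> L"
    and pos: "qdeg (compositum K L) > 0"
  shows "2 * min (qdeg K) (qdeg L) \<le> qdeg (compositum K L)"
proof -
  obtain x where "x \<in> L - K \<or> x \<in> K - L" using \<open>K \<noteq> L\<close> by blast
  then show ?thesis
  proof
    assume "x \<in> L - K"
    then show ?thesis
      using qdeg_double_le[OF K subfield_of_C_compositum[of K L], where x = x]
        compositum_upper[of K L] pos by auto
  next
    assume "x \<in> K - L"
    then show ?thesis
      using qdeg_double_le[OF L subfield_of_C_compositum[of L K], where x = x]
        compositum_upper[of L K] pos unfolding compositum_commute[of K L] by auto
  qed
qed

lemma delta_galois:
  assumes "galois_over_Q K" "galois_over_Q L"
  shows "delta K L = 2 / qdeg (compositum K L) + 1 - 1 / qdeg K - 1 / qdeg L"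
  unfolding delta_def galois_closure_eq_self[OF assms(1)] galois_closure_eq_self[OF assms(2)] ..

lemma two_div_add_le:
  fixes n m :: nat
  assumes "n \<ge> 2" and "m = 0 \<or> 2 * n \<le> m"
  shows "2 / m + 1 - 2 / n \<le> 1 - 2 / (real n)\<^sup>2"
  using assms(2)
proof
  assume "m = 0"
  then show ?thesis using assms(1) by (simp add: field_simps power2_eq_square)
next
  assume "2 * n \<le> m"
  then have "2 / m \<le> 2 / (2 * real n)"
    using assms(1) by (intro divide_left_mono) (simp_all flip: of_nat_mult)
  moreover have "2 / (real n)\<^sup>2 \<le> 1 / n"
    using assms(1) by (simp add: field_simps power2_eq_square)
  ultimately show ?thesis by simp
qed

theorem theorem3p7:
  fixes n :: nat and K L :: "complex set"
  assumes "n > 0"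
    and "number_field K" and "number_field L"
    and "qdeg K = n" and "qdeg L = n"
    and "galois_over_Q K" and "galois_over_Q L"
    and "delta K L > 1 - 2 / (real n)^2"
  shows "K = L"
proof (rule ccontr)
  assume "K \<noteq> L"
  have sub: "subfield_of_C K" "subfield_of_C L"
    using assms(2,3) unfolding number_field_def by simp_all
  have "n \<noteq> 1"
    using \<open>K \<noteq> L\<close> qdeg_eq_1_subset[OF sub] qdeg_eq_1_subset[OF sub(2,1)] assms(4,5) by auto
  with assms(1) have "n \<ge> 2" by simp
  define m where "m = qdeg (compositum K L)"
  have "m = 0 \<or> 2 * n \<le> m"
    using qdeg_compositum_double_le[OF assms(2,3) \<open>K \<noteq> L\<close>] assms(4,5) unfolding m_def by auto
  then have "delta K L \<le> 1 - 2 / (real n)\<^sup>2"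
    using two_div_add_le[OF \<open>n \<ge> 2\<close>, of m] delta_galois[OF assms(6,7)] assms(4,5)
    unfolding m_def by fastforce
  with assms(8) show False by simp
qed

end
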